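(* Let $S_1\subseteq S_2\subseteq\mathbb{Z}^k$ and $T\subseteq\mathbb{Z}^k$ be finite sets such that $S_1$ and $S_2$ have the same linear span over $\mathbb{Q}$. If $(S_1,T)$ is cancellable, then $(S_2,T)$ is cancellable.
   Context: For finite sets $S,T\subseteq\mathbb{Z}^k$, the pair $(S,T)$ is called cancellable if there exist integers $x_u\ge 1$ for $u\in S$ and $y_v\ge 0$ for $v\in T$ such that $\sum_{u\in S}x_u u+\sum_{v\in T}y_v v=0$. *)

theory Defs
  imports "HOL-Analysis.Analysis"
begin

definition cancellable :: "(int ^ 'k) set \<Rightarrow> (int ^ 'k) set \<Rightarrow> bool" where
  "cancellable S T \<longleftrightarrow>
     (\<exists>x :: int ^ 'k \<Rightarrow> int. \<exists>y :: int ^ 'k \<Rightarrow> int.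
        (\<forall>u\<in>S. x u \<ge> 1) \<and> (\<forall>v\<in>T. y v \<ge> 0) \<and>
        (\<Sum>u\<in>S. x u *s u) + (\<Sum>v\<in>T. y v *s v) = 0)"

definition rat_vec :: "int ^ 'k \<Rightarrow> rat ^ 'k" where
  "rat_vec u = (\<chi> i. of_int (u $ i))"

definition qspan :: "(int ^ 'k) set \<Rightarrow> (rat ^ 'k) set" where
  "qspan S = {w. \<exists>c :: int ^ 'k \<Rightarrow> rat. w = (\<Sum>u\<in>S. c u *s rat_vec u)}"

end

theory Submission
  imports Defs
begin

text \<open>Every w \<in> S2 lies in the rational span of S1, so clearing denominators gives a relation
  D w = \<Sum> d u u over S1 with integers D \<ge> 1 and d u of arbitrary sign. Adding the vectors of
  S2 - S1 one at a time, a cancelling combination for (S, T) is scaled by N > \<Sum>\<bar>d u\<bar> and the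
  relation for the new vector w is subtracted from it: w receives the positive coefficient D,
  while every old coefficient N x u - d u stays positive.\<close>

lemma rat_vec_in_qspan:
  assumes "finite S" and "w \<in> S"
  shows "rat_vec w \<in> qspan S"
proof -
  have "(\<Sum>u\<in>S. (if u = w then 1 else 0) *s rat_vec u) = (\<Sum>u\<in>S. if u = w then rat_vec u else 0)"
    by (rule sum.cong) (auto simp: vec_eq_iff)
  also have "\<dots> = rat_vec w"
    using assms by (simp add: sum.delta)
  finally show ?thesis
    unfolding qspan_def by (metis (mono_tags) mem_Collect_eq)
qed

lemma qspan_mono:
  assumes "finite S'" and "S \<subseteq> S'"
  shows "qspan S \<subseteq> qspan S'"
proof
  fix v assume "v \<in> qspan S"
  then obtain c where c: "v = (\<Sum>u\<in>S. c u *s rat_vec u)"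
    unfolding qspan_def by blast
  define c' where "c' u = (if u \<in> S then c u else 0)" for u
  have "v = (\<Sum>u\<in>S. c' u *s rat_vec u)"
    by (simp add: c c'_def)
  also have "\<dots> = (\<Sum>u\<in>S'. c' u *s rat_vec u)"
    by (rule sum.mono_neutral_left) (use assms in \<open>auto simp: c'_def\<close>)
  finally show "v \<in> qspan S'"
    unfolding qspan_def by blast
qed

lemma denominator_mult_in_Ints: "(of_int (snd (quotient_of q)) * q :: rat) \<in> \<int>"
proof -
  obtain a b where ab: "quotient_of q = (a, b)"
    by (cases "quotient_of q")
  have "of_int b * q = of_int a"
    using quotient_of_div[OF ab] quotient_of_denom_pos[OF ab] by simp
  then show ?thesis
    using ab by simp
qed

lemma qspan_clear_denominators:
  assumes fin: "finite S" and "rat_vec w \<in> qspan S"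
  shows "\<exists>D d. D \<ge> (1::int) \<and> D *s w = (\<Sum>u\<in>S. d u *s u)"
proof -
  obtain c where c: "rat_vec w = (\<Sum>u\<in>S. c u *s rat_vec u)"
    using assms(2) unfolding qspan_def by blast
  define D where "D = (\<Prod>u\<in>S. snd (quotient_of (c u)))"
  have "D > 0"
    unfolding D_def by (rule prod_pos) (simp add: quotient_of_denom_pos')
  have scaled_in_Ints: "of_int D * c u \<in> \<int>" if u: "u \<in> S" for u
  proof -
    obtain k where "D = snd (quotient_of (c u)) * k"
      using dvd_prodI[OF fin u, of "\<lambda>u. snd (quotient_of (c u))"]
      unfolding D_def by (auto elim: dvdE)
    then have "of_int D * c u = of_int k * (of_int (snd (quotient_of (c u))) * c u)"
      by simp
    also have "\<dots> \<in> \<int>"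
      by (intro Ints_mult Ints_of_int denominator_mult_in_Ints)
    finally show ?thesis .
  qed
  define d where "d u = \<lfloor>of_int D * c u\<rfloor>" for u
  have d: "(of_int (d u) :: rat) = of_int D * c u" if "u \<in> S" for u
    using scaled_in_Ints[OF that] unfolding d_def by (metis Ints_cases floor_of_int)
  have "D *s w = (\<Sum>u\<in>S. d u *s u)"
  proof (rule vec_eq_iff[THEN iffD2], rule allI)
    fix i
    have "(of_int (w $ i) :: rat) = (\<Sum>u\<in>S. c u * of_int (u $ i))"
      using arg_cong[OF c, of "\<lambda>v. v $ i"] by (simp add: rat_vec_def)
    then have "(of_int ((D *s w) $ i) :: rat) = (\<Sum>u\<in>S. of_int D * c u * of_int (u $ i))"
      by (simp add: sum_distrib_left mult.assoc)
    also have "\<dots> = of_int ((\<Sum>u\<in>S. d u *s u) $ i)"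
      by (simp add: d cong: sum.cong)
    finally show "(D *s w) $ i = (\<Sum>u\<in>S. d u *s u) $ i"
      by (simp only: of_int_eq_iff)
  qed
  then show ?thesis
    using \<open>D > 0\<close> by (intro exI[of _ D] exI[of _ d]) simp
qed

lemma cancellable_insert_integer_combination:
  assumes fin: "finite S" and "w \<notin> S"
    and "D \<ge> 1" and rel: "D *s w = (\<Sum>u\<in>S. d u *s u)"
    and "cancellable S T"
  shows "cancellable (insert w S) T"
proof -
  obtain x y where x: "\<forall>u\<in>S. x u \<ge> 1" and y: "\<forall>v\<in>T. y v \<ge> 0"
    and zero: "(\<Sum>u\<in>S. x u *s u) + (\<Sum>v\<in>T. y v *s v) = 0"
    using \<open>cancellable S T\<close> unfolding cancellable_def by blast
  define N where "N = 1 + (\<Sum>u\<in>S. \<bar>d u\<bar>)"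
  define x' where "x' u = (if u = w then D else N * x u - d u)" for u
  define y' where "y' v = N * y v" for v
  have "N \<ge> 1"
    unfolding N_def by (simp add: sum_nonneg)
  have "x' u \<ge> 1" if "u \<in> S" for u
  proof -
    have "\<bar>d u\<bar> \<le> (\<Sum>u\<in>S. \<bar>d u\<bar>)"
      using fin that by (intro member_le_sum) auto
    then have "N \<ge> 1 + \<bar>d u\<bar>"
      unfolding N_def by simp
    moreover have "N * x u \<ge> N"
      using x that \<open>N \<ge> 1\<close> by simp
    moreover have "x' u = N * x u - d u"
      using that \<open>w \<notin> S\<close> by (auto simp: x'_def)
    ultimately show ?thesis
      using abs_ge_self[of "d u"] by linarith
  qed
  then have x': "\<forall>u\<in>insert w S. x' u \<ge> 1"
    using \<open>D \<ge> 1\<close> by (simp add: x'_def)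
  have y': "\<forall>v\<in>T. y' v \<ge> 0"
    using y \<open>N \<ge> 1\<close> by (simp add: y'_def)
  have "(\<Sum>u\<in>insert w S. x' u *s u) + (\<Sum>v\<in>T. y' v *s v) = 0"
  proof (rule vec_eq_iff[THEN iffD2], rule allI)
    fix i
    have zero_i: "(\<Sum>u\<in>S. x u * u $ i) + (\<Sum>v\<in>T. y v * v $ i) = 0"
      using arg_cong[OF zero, of "\<lambda>v. v $ i"] by simp
    have rel_i: "D * w $ i = (\<Sum>u\<in>S. d u * u $ i)"
      using arg_cong[OF rel, of "\<lambda>v. v $ i"] by simp
    have "(\<Sum>u\<in>S. x' u * u $ i) = (\<Sum>u\<in>S. N * (x u * u $ i) - d u * u $ i)"
      using \<open>w \<notin> S\<close> by (intro sum.cong) (auto simp: x'_def algebra_simps)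
    then have "((\<Sum>u\<in>insert w S. x' u *s u) + (\<Sum>v\<in>T. y' v *s v)) $ i
        = N * ((\<Sum>u\<in>S. x u * u $ i) + (\<Sum>v\<in>T. y v * v $ i))"
      using fin \<open>w \<notin> S\<close>
      by (simp add: x'_def y'_def rel_i sum_subtractf sum_distrib_left algebra_simps)
    then show "((\<Sum>u\<in>insert w S. x' u *s u) + (\<Sum>v\<in>T. y' v *s v)) $ i = 0 $ i"
      using zero_i by simp
  qed
  then show ?thesis
    unfolding cancellable_def using x' y' by blast
qed

lemma cancellable_insert_qspan:
  assumes "finite S" and "w \<notin> S" and "rat_vec w \<in> qspan S" and "cancellable S T"
  shows "cancellable (insert w S) T"
  using qspan_clear_denominators[OF assms(1,3)] cancellable_insert_integer_combination assms
  by blast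

lemma cancellable_superset_in_qspan:
  assumes "finite S1" and "finite S2" and "S1 \<subseteq> S2"
    and span: "\<And>w. w \<in> S2 \<Longrightarrow> rat_vec w \<in> qspan S1"
    and "cancellable S1 T"
  shows "cancellable S2 T"
proof -
  have "cancellable (S1 \<union> F) T" if "finite F" "F \<subseteq> S2 - S1" for F
    using that
  proof (induction F rule: finite_induct)
    case empty
    then show ?case
      using \<open>cancellable S1 T\<close> by simp
  next
    case (insert w F)
    have "rat_vec w \<in> qspan (S1 \<union> F)"
      using span insert.prems qspan_mono[of "S1 \<union> F" S1] \<open>finite S1\<close> insert.hyps(1) by blast
    then show ?case
      using cancellable_insert_qspan[of "S1 \<union> F" w] insert \<open>finite S1\<close> by auto
  qed
  from this[of "S2 - S1"] show ?thesis
    using assms(2,3) by (simp add: Un_absorb1)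
qed

theorem mainTheorem7:
  fixes S1 S2 T :: "(int ^ 'k) set"
  assumes "finite S1" and "finite S2" and "finite T"
    and "S1 \<subseteq> S2"
    and "qspan S1 = qspan S2"
    and "cancellable S1 T"
  shows "cancellable S2 T"
proof (rule cancellable_superset_in_qspan[OF assms(1,2,4) _ assms(6)])
  show "rat_vec w \<in> qspan S1" if "w \<in> S2" for w
    using rat_vec_in_qspan[OF assms(2) that] assms(5) by simp
qed

end
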